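(* Let $\mathcal{M}$ be the class of Borel probability measures on $\mathbb{R}$ with non-negative mean, unit variance and finite third moment, and let $\mathcal{D}$ be the discretely supported Borel probability measures on $\mathbb{R}$. For $P\in\mathcal{M}\cup\mathcal{D}$ and $\boldsymbol{z}=(z_1,z_2,\dots)\in\mathbb{R}^\infty$ let $T_k(\boldsymbol z,P)=\sqrt k\big(\max\{k^{-1}\sum_{i=1}^kz_i,0\}-\max\{E_P[Z],0\}\big)$ and let $\psi_k(P)$ be the law of $T_k(\boldsymbol z,P)$ when $\boldsymbol z$ is drawn from the product measure $P^\infty$. Then for any $k\in\mathbb{N}$ and any $P,Q\in\mathcal{M}\cup\mathcal{D}$, $$\|\psi_k(P)-\psi_k(Q)\|_{LB}\le2\sqrt k\,\mathcal{W}(P,Q).$$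
   Context: $LB$ is the class of real-valued functions bounded by one and Lipschitz with constant one, and for probability measures $\mu,\nu$ on $\mathbb{R}$, $\|\mu-\nu\|_{LB}=\sup_{f\in LB}|\int fd\mu-\int fd\nu|$. $\mathcal{W}(P,Q)=\inf_{\zeta\in H(P,Q)}\int|z-z'|\zeta(dz,dz')$ is the Wasserstein-1 distance, $H(P,Q)$ being the set of Borel probability measures on $\mathbb{R}^2$ with marginals $P$ and $Q$. *)

theory Defs
  imports "HOL-Probability.Probability"
begin

definition borel_prob :: "real measure \<Rightarrow> bool" where
  "borel_prob P \<longleftrightarrow> prob_space P \<and> sets P = sets (borel :: real measure)"

definition class_M :: "real measure set" where
  "class_M = {P. borel_prob P \<and> integrable P (\<lambda>x. x)
                 \<and> (\<integral>x. x \<partial>P) \<ge> 0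
                 \<and> integrable P (\<lambda>x. (x - (\<integral>y. y \<partial>P))\<^sup>2)
                 \<and> (\<integral>x. (x - (\<integral>y. y \<partial>P))\<^sup>2 \<partial>P) = 1
                 \<and> integrable P (\<lambda>x. \<bar>x\<bar> ^ 3)}"

definition class_D :: "real measure set" where
  "class_D = {P. borel_prob P \<and> (\<exists>A. countable A \<and> A \<in> sets P \<and> emeasure P A = 1)}"

text \<open>The statistic T_k (coordinates indexed from 0).\<close>
definition T_stat :: "nat \<Rightarrow> (nat \<Rightarrow> real) \<Rightarrow> real measure \<Rightarrow> real" where
  "T_stat k z P = sqrt (real k) *
     (max ((\<Sum>i<k. z i) / real k) 0 - max (\<integral>x. x \<partial>P) 0)"

definition psi :: "nat \<Rightarrow> real measure \<Rightarrow> real measure" where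
  "psi k P = distr (PiM (UNIV :: nat set) (\<lambda>_. P)) borel (\<lambda>z. T_stat k z P)"

definition LB :: "(real \<Rightarrow> real) set" where
  "LB = {f. (\<forall>x. \<bar>f x\<bar> \<le> 1) \<and> (\<forall>x y. \<bar>f x - f y\<bar> \<le> \<bar>x - y\<bar>)}"

definition LB_dist :: "real measure \<Rightarrow> real measure \<Rightarrow> real" where
  "LB_dist \<mu> \<nu> = (SUP f\<in>LB. \<bar>(\<integral>x. f x \<partial>\<mu>) - (\<integral>x. f x \<partial>\<nu>)\<bar>)"

definition couplings :: "real measure \<Rightarrow> real measure \<Rightarrow> (real \<times> real) measure set" where
  "couplings P Q = {\<zeta>. prob_space \<zeta> \<and> sets \<zeta> = sets (borel \<Otimes>\<^sub>M borel :: (real \<times> real) measure)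
                      \<and> distr \<zeta> borel fst = P \<and> distr \<zeta> borel snd = Q}"

definition wasserstein :: "real measure \<Rightarrow> real measure \<Rightarrow> ennreal" where
  "wasserstein P Q = (INF \<zeta>\<in>couplings P Q. \<integral>\<^sup>+ p. ennreal \<bar>fst p - snd p\<bar> \<partial>\<zeta>)"

end

theory Submission
  imports Defs
begin

(* Given any coupling \<zeta> of P and Q, draw k independent pairs (x_i, y_i) from \<zeta>: the x_i are
   an i.i.d. sample from P and the y_i one from Q, so T_k(x, P) and T_k(y, Q) realise psi_k(P)
   and psi_k(Q) on a common probability space. For f in LB, the difference of the expectations
   of f is then at most E |T_k(x, P) - T_k(y, Q)|, and as t \<mapsto> max t 0 is 1-Lipschitz this
   is at most sqrt k (E_\<zeta> |x - y| + |E_P Z - E_Q Z|) \<le> 2 sqrt k E_\<zeta> |x - y|; now take the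
   infimum over couplings. *)

lemma ennreal_le_mult_INF:
  fixes a c :: ennreal
  assumes c: "0 < c" "c \<noteq> \<top>" and le: "\<And>i. i \<in> I \<Longrightarrow> a \<le> c * g i"
  shows "a \<le> c * (INF i\<in>I. g i)"
proof -
  have "a / c \<le> (INF i\<in>I. g i)"
    using le c(1) by (intro INF_greatest divide_le_posI_ennreal) auto
  then have "c * (a / c) \<le> c * (INF i\<in>I. g i)"
    by (rule mult_left_mono) simp
  moreover have "c * (a / c) = a"
    using c by (simp add: ennreal_times_divide mult.commute[of c] mult_divide_eq_ennreal)
  ultimately show ?thesis by simp
qed

lemma (in prob_space) integral_PiM_sum_components:
  assumes I: "finite I" and g: "integrable M g"
  shows "integrable (PiM I (\<lambda>_. M)) (\<lambda>w. \<Sum>i\<in>I. g (w i))"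
    and "(\<integral>w. (\<Sum>i\<in>I. g (w i)) \<partial>PiM I (\<lambda>_. M)) = real (card I) * (\<integral>x. g x \<partial>M)"
proof -
  interpret product_prob_space "\<lambda>_. M" I
    by unfold_locales
  have gm: "g \<in> borel_measurable M" using g by simp
  have comp: "(\<lambda>w. w i) \<in> measurable (PiM I (\<lambda>_. M)) M" if "i \<in> I" for i
    using that by (intro measurable_component_singleton)
  have int_i: "integrable (PiM I (\<lambda>_. M)) (\<lambda>w. g (w i))" if "i \<in> I" for i
    using integrable_distr_eq[OF comp[OF that] gm] PiM_component[OF that] g by simp
  have eq_i: "(\<integral>w. g (w i) \<partial>PiM I (\<lambda>_. M)) = (\<integral>x. g x \<partial>M)" if "i \<in> I" for i
    using integral_distr[OF comp[OF that] gm] PiM_component[OF that] by simp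
  show "integrable (PiM I (\<lambda>_. M)) (\<lambda>w. \<Sum>i\<in>I. g (w i))"
    using int_i by (intro Bochner_Integration.integrable_sum)
  show "(\<integral>w. (\<Sum>i\<in>I. g (w i)) \<partial>PiM I (\<lambda>_. M)) = real (card I) * (\<integral>x. g x \<partial>M)"
    using int_i eq_i by (simp add: Bochner_Integration.integral_sum)
qed

lemma LB_borel_measurable:
  assumes "f \<in> LB"
  shows "f \<in> borel_measurable borel"
proof -
  have "1-lipschitz_on UNIV f"
    using assms by (intro lipschitz_onI) (auto simp: LB_def dist_real_def)
  then show ?thesis
    by (intro borel_measurable_continuous_onI lipschitz_on_continuous_on)
qed

lemma couplingsD:
  assumes "\<zeta> \<in> couplings P Q"
  shows "prob_space \<zeta>" and "distr \<zeta> borel fst = P" and "distr \<zeta> borel snd = Q"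
    and "fst \<in> borel_measurable \<zeta>" and "snd \<in> borel_measurable \<zeta>"
proof -
  have "sets \<zeta> = sets (borel \<Otimes>\<^sub>M borel :: (real \<times> real) measure)"
    using assms by (simp add: couplings_def)
  then have meas_eq:
      "borel_measurable \<zeta> = borel_measurable (borel \<Otimes>\<^sub>M borel :: (real \<times> real) measure)"
    by (rule measurable_cong_sets) simp
  show "fst \<in> borel_measurable \<zeta>" and "snd \<in> borel_measurable \<zeta>"
    unfolding meas_eq by measurable
  show "prob_space \<zeta>" and "distr \<zeta> borel fst = P" and "distr \<zeta> borel snd = Q"
    using assms by (auto simp: couplings_def)
qed

lemma T_stat_cong:
  assumes "\<And>i. i < k \<Longrightarrow> z i = z' i"
  shows "T_stat k z P = T_stat k z' P"
proof -
  have "(\<Sum>i<k. z i) = (\<Sum>i<k. z' i)" using assms by simp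
  then show ?thesis unfolding T_stat_def by simp
qed

lemma T_stat_borel_measurable:
  assumes M: "sets M = sets borel" and I: "{..<k} \<subseteq> I"
  shows "(\<lambda>z. T_stat k z P) \<in> borel_measurable (PiM I (\<lambda>_. M))"
proof -
  have "sets (PiM I (\<lambda>_. M)) = sets (PiM I (\<lambda>_. borel :: real measure))"
    by (rule sets_PiM_cong) (auto simp: M)
  moreover have "(\<lambda>z. T_stat k z P) \<in> borel_measurable (PiM I (\<lambda>_. borel :: real measure))"
    unfolding T_stat_def by measurable (use I in auto)
  ultimately show ?thesis
    by (simp cong: measurable_cong_sets)
qed

lemma abs_T_stat_diff_le:
  shows "\<bar>T_stat k x P - T_stat k y Q\<bar> \<le>
    sqrt (real k) / real k * (\<Sum>i<k. \<bar>x i - y i\<bar>)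
    + sqrt (real k) * \<bar>max (\<integral>t. t \<partial>P) 0 - max (\<integral>t. t \<partial>Q) 0\<bar>"
proof -
  let ?A = "(\<Sum>i<k. x i) / real k" and ?B = "(\<Sum>i<k. y i) / real k"
  let ?mP = "max (\<integral>t. t \<partial>P) 0" and ?mQ = "max (\<integral>t. t \<partial>Q) 0"
  have max_le: "\<bar>max a 0 - max b 0\<bar> \<le> \<bar>a - b\<bar>" for a b :: real
    by (simp add: max_def)
  have "\<bar>?A - ?B\<bar> = \<bar>\<Sum>i<k. x i - y i\<bar> / real k"
    by (simp add: diff_divide_distrib[symmetric] sum_subtractf)
  also have "\<dots> \<le> (\<Sum>i<k. \<bar>x i - y i\<bar>) / real k"
    by (intro divide_right_mono sum_abs) simp
  finally have mean_le: "\<bar>?A - ?B\<bar> \<le> (\<Sum>i<k. \<bar>x i - y i\<bar>) / real k" .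
  have "T_stat k x P - T_stat k y Q = sqrt (real k) * ((max ?A 0 - max ?B 0) - (?mP - ?mQ))"
    unfolding T_stat_def by (simp add: right_diff_distrib)
  then have "\<bar>T_stat k x P - T_stat k y Q\<bar> = sqrt (real k) * \<bar>(max ?A 0 - max ?B 0) - (?mP - ?mQ)\<bar>"
    by (simp add: abs_mult)
  also have "\<dots> \<le> sqrt (real k) * (\<bar>max ?A 0 - max ?B 0\<bar> + \<bar>?mP - ?mQ\<bar>)"
    by (intro mult_left_mono abs_triangle_ineq4) simp
  also have "\<dots> \<le> sqrt (real k) * ((\<Sum>i<k. \<bar>x i - y i\<bar>) / real k + \<bar>?mP - ?mQ\<bar>)"
    by (intro mult_left_mono add_right_mono order_trans[OF max_le mean_le]) simp
  finally show ?thesis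
    by (simp add: distrib_left)
qed

lemma integral_psi_eq_PiM_finite:
  fixes h :: "real \<Rightarrow> real"
  assumes P: "borel_prob P" and h: "h \<in> borel_measurable borel"
  shows "(\<integral>x. h x \<partial>psi k P) = (\<integral>z. h (T_stat k z P) \<partial>PiM {..<k} (\<lambda>_. P))"
proof -
  have sP: "sets P = sets borel" and pP: "prob_space P"
    using P by (auto simp: borel_prob_def)
  interpret P: product_prob_space "\<lambda>_::nat. P" UNIV
    by (rule product_prob_spaceI) (rule pP)
  note T_meas = T_stat_borel_measurable[OF sP]
  have "(\<integral>x. h x \<partial>psi k P) = (\<integral>z. h (T_stat k z P) \<partial>PiM UNIV (\<lambda>_. P))"
    unfolding psi_def by (rule integral_distr[OF T_meas[OF subset_UNIV] h])
  also have "\<dots> = (\<integral>z. h (T_stat k (restrict z {..<k}) P) \<partial>PiM UNIV (\<lambda>_. P))"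
    by (intro Bochner_Integration.integral_cong refl arg_cong[where f=h] T_stat_cong) simp
  also have "\<dots> = (\<integral>z. h (T_stat k z P)
      \<partial>distr (PiM UNIV (\<lambda>_. P)) (PiM {..<k} (\<lambda>_. P)) (\<lambda>z. restrict z {..<k}))"
    by (rule integral_distr[symmetric, OF measurable_restrict_subset[OF subset_UNIV]
          measurable_compose[OF T_meas[OF order_refl] h]])
  also have "\<dots> = (\<integral>z. h (T_stat k z P) \<partial>PiM {..<k} (\<lambda>_. P))"
    using P.distr_PiM_restrict_finite[of "{..<k}"] by simp
  finally show ?thesis .
qed

lemma integral_psi_eq_PiM_distr:
  fixes h :: "real \<Rightarrow> real"
  assumes P: "borel_prob P" and M: "prob_space M" and X: "X \<in> borel_measurable M"
    and law: "distr M borel X = P" and h: "h \<in> borel_measurable borel"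
  shows "(\<integral>x. h x \<partial>psi k P) = (\<integral>w. h (T_stat k (\<lambda>i. X (w i)) P) \<partial>PiM {..<k} (\<lambda>_. M))"
proof -
  have sP: "sets P = sets borel" and pP: "prob_space P"
    using P by (auto simp: borel_prob_def)
  have XP: "X \<in> measurable M P"
    using X by (simp cong: measurable_cong_sets add: sP)
  have lawP: "distr M P X = P"
    using law by (metis distr_cong sP)
  have X_comp: "compose {..<k} X \<in> measurable (PiM {..<k} (\<lambda>_. M)) (PiM {..<k} (\<lambda>_. P))"
    unfolding compose_def
    by (rule measurable_restrict)
      (rule measurable_compose[OF measurable_component_singleton[where M="\<lambda>_. M"] XP]; simp)
  have hT: "(\<lambda>z. h (T_stat k z P)) \<in> borel_measurable (PiM {..<k} (\<lambda>_. P))"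
    using T_stat_borel_measurable[OF sP order_refl] h by measurable
  have "(\<integral>x. h x \<partial>psi k P) = (\<integral>z. h (T_stat k z P) \<partial>PiM {..<k} (\<lambda>_. P))"
    by (rule integral_psi_eq_PiM_finite[OF P h])
  also have "PiM {..<k} (\<lambda>_. P) = distr (PiM {..<k} (\<lambda>_. M)) (PiM {..<k} (\<lambda>_. P)) (compose {..<k} X)"
    by (subst distr_PiM_finite_prob_space') (auto simp: M pP XP lawP)
  also have "(\<integral>z. h (T_stat k z P) \<partial>\<dots>)
      = (\<integral>w. h (T_stat k (compose {..<k} X w) P) \<partial>PiM {..<k} (\<lambda>_. M))"
    by (rule integral_distr[OF X_comp hT])
  also have "\<dots> = (\<integral>w. h (T_stat k (\<lambda>i. X (w i)) P) \<partial>PiM {..<k} (\<lambda>_. M))"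
    by (intro Bochner_Integration.integral_cong refl arg_cong[where f=h] T_stat_cong)
      (simp add: compose_def)
  finally show ?thesis .
qed

lemma abs_max_mean_diff_le_coupling:
  assumes \<zeta>: "\<zeta> \<in> couplings P Q" and int: "integrable \<zeta> (\<lambda>p. \<bar>fst p - snd p\<bar>)"
  shows "\<bar>max (\<integral>x. x \<partial>P) 0 - max (\<integral>x. x \<partial>Q) 0\<bar> \<le> (\<integral>p. \<bar>fst p - snd p\<bar> \<partial>\<zeta>)"
proof -
  note c = couplingsD[OF \<zeta>]
  have int_P: "integrable P (\<lambda>x. x) \<longleftrightarrow> integrable \<zeta> fst"
    using integrable_distr_eq[OF c(4), of "\<lambda>x. x"] c(2) by simp
  have int_Q: "integrable Q (\<lambda>x. x) \<longleftrightarrow> integrable \<zeta> snd"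
    using integrable_distr_eq[OF c(5), of "\<lambda>x. x"] c(3) by simp
  have mean_P: "(\<integral>x. x \<partial>P) = (\<integral>p. fst p \<partial>\<zeta>)"
    using integral_distr[OF c(4), of "\<lambda>x. x"] c(2) by simp
  have mean_Q: "(\<integral>x. x \<partial>Q) = (\<integral>p. snd p \<partial>\<zeta>)"
    using integral_distr[OF c(5), of "\<lambda>x. x"] c(3) by simp
  have int_diff: "integrable \<zeta> (\<lambda>p. fst p - snd p)"
    using int c(4,5) by (subst integrable_abs_iff[symmetric]) auto
  have fst_iff_snd: "integrable \<zeta> fst \<longleftrightarrow> integrable \<zeta> snd"
  proof
    assume "integrable \<zeta> fst"
    then have "integrable \<zeta> (\<lambda>p. fst p - (fst p - snd p))"
      using int_diff by (rule Bochner_Integration.integrable_diff)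
    then show "integrable \<zeta> snd" by simp
  next
    assume "integrable \<zeta> snd"
    then have "integrable \<zeta> (\<lambda>p. snd p + (fst p - snd p))"
      using int_diff by (rule Bochner_Integration.integrable_add)
    then show "integrable \<zeta> fst" by simp
  qed
  show ?thesis
  proof (cases "integrable \<zeta> fst")
    case True
    then have "\<bar>(\<integral>p. fst p \<partial>\<zeta>) - (\<integral>p. snd p \<partial>\<zeta>)\<bar> = \<bar>\<integral>p. fst p - snd p \<partial>\<zeta>\<bar>"
      using fst_iff_snd by simp
    also have "\<dots> \<le> (\<integral>p. \<bar>fst p - snd p\<bar> \<partial>\<zeta>)"
      by (rule integral_abs_bound)
    finally show ?thesis
      unfolding mean_P mean_Q by linarith
  next
    case False
    \<comment> \<open>neither mean exists, and Bochner integration assigns both the junk value 0\<close>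
    then have "(\<integral>x. x \<partial>P) = 0" and "(\<integral>x. x \<partial>Q) = 0"
      using fst_iff_snd int_P int_Q by (auto intro: not_integrable_integral_eq)
    then show ?thesis by simp
  qed
qed

lemma LB_integral_psi_diff_le_coupling:
  assumes P: "borel_prob P" and Q: "borel_prob Q" and \<zeta>: "\<zeta> \<in> couplings P Q"
    and f: "f \<in> LB" and k: "k \<ge> 1"
    and int: "integrable \<zeta> (\<lambda>p. \<bar>fst p - snd p\<bar>)"
  shows "\<bar>(\<integral>x. f x \<partial>psi k P) - (\<integral>x. f x \<partial>psi k Q)\<bar>
    \<le> 2 * sqrt (real k) * (\<integral>p. \<bar>fst p - snd p\<bar> \<partial>\<zeta>)"
proof -
  note c = couplingsD[OF \<zeta>]
  note [measurable] = c(4,5) LB_borel_measurable[OF f]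
  interpret \<zeta>: prob_space \<zeta> by (rule c(1))
  define Z where "Z = PiM {..<k} (\<lambda>_. \<zeta>)"
  interpret Z: prob_space Z
    unfolding Z_def by (rule prob_space_PiM) (rule c(1))
  define W where "W = (\<integral>p. \<bar>fst p - snd p\<bar> \<partial>\<zeta>)"
  define m where "m = \<bar>max (\<integral>x. x \<partial>P) 0 - max (\<integral>x. x \<partial>Q) 0\<bar>"
  define fP where "fP = (\<lambda>w :: nat \<Rightarrow> real \<times> real. f (T_stat k (\<lambda>i. fst (w i)) P))"
  define fQ where "fQ = (\<lambda>w :: nat \<Rightarrow> real \<times> real. f (T_stat k (\<lambda>i. snd (w i)) Q))"
  define bound where "bound = (\<lambda>w :: nat \<Rightarrow> real \<times> real.
    sqrt (real k) / real k * (\<Sum>i<k. \<bar>fst (w i) - snd (w i)\<bar>) + sqrt (real k) * m)"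
  have m_le: "m \<le> W"
    unfolding m_def W_def by (rule abs_max_mean_diff_le_coupling[OF \<zeta> int])
  have "fP \<in> borel_measurable Z" and "fQ \<in> borel_measurable Z"
    unfolding fP_def fQ_def Z_def T_stat_def by measurable
  then have int_fP: "integrable Z fP" and int_fQ: "integrable Z fQ"
    using f by (auto intro!: Z.integrable_const_bound[of _ 1] simp: fP_def fQ_def LB_def)
  have int_sum: "integrable Z (\<lambda>w. \<Sum>i<k. \<bar>fst (w i) - snd (w i)\<bar>)"
    and integral_sum: "(\<integral>w. (\<Sum>i<k. \<bar>fst (w i) - snd (w i)\<bar>) \<partial>Z) = real k * W"
    using \<zeta>.integral_PiM_sum_components[OF finite_lessThan int] by (simp_all add: Z_def W_def)
  have int_bound: "integrable Z bound"
    unfolding bound_def using int_sum by simp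
  have integral_bound: "(\<integral>w. bound w \<partial>Z) = sqrt (real k) * (W + m)"
    unfolding bound_def using int_sum integral_sum k by (simp add: Z.prob_space algebra_simps)
  have pointwise: "\<bar>fP w - fQ w\<bar> \<le> bound w" for w
    using f abs_T_stat_diff_le[of k "\<lambda>i. fst (w i)" P "\<lambda>i. snd (w i)" Q]
    unfolding fP_def fQ_def bound_def m_def LB_def by (blast intro: order_trans)
  have "(\<integral>x. f x \<partial>psi k P) = (\<integral>w. fP w \<partial>Z)"
    unfolding fP_def Z_def by (rule integral_psi_eq_PiM_distr[OF P c(1,4,2) LB_borel_measurable[OF f]])
  moreover have "(\<integral>x. f x \<partial>psi k Q) = (\<integral>w. fQ w \<partial>Z)"
    unfolding fQ_def Z_def by (rule integral_psi_eq_PiM_distr[OF Q c(1,5,3) LB_borel_measurable[OF f]])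
  ultimately have "\<bar>(\<integral>x. f x \<partial>psi k P) - (\<integral>x. f x \<partial>psi k Q)\<bar> = \<bar>\<integral>w. fP w - fQ w \<partial>Z\<bar>"
    using int_fP int_fQ by simp
  also have "\<dots> \<le> (\<integral>w. bound w \<partial>Z)"
    using int_fP int_fQ int_bound pointwise
    by (intro order_trans[OF integral_abs_bound] integral_mono) auto
  also have "\<dots> \<le> 2 * sqrt (real k) * W"
    unfolding integral_bound using m_le by (simp add: mult_right_mono algebra_simps)
  finally show ?thesis
    unfolding W_def .
qed

lemma LB_dist_psi_le_coupling:
  assumes P: "borel_prob P" and Q: "borel_prob Q" and \<zeta>: "\<zeta> \<in> couplings P Q" and k: "k \<ge> 1"
  shows "ennreal (LB_dist (psi k P) (psi k Q))
    \<le> ennreal (2 * sqrt (real k)) * (\<integral>\<^sup>+ p. ennreal \<bar>fst p - snd p\<bar> \<partial>\<zeta>)"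
proof (cases "(\<integral>\<^sup>+ p. ennreal \<bar>fst p - snd p\<bar> \<partial>\<zeta>) = \<top>")
  case True
  then show ?thesis
    using k by (simp add: ennreal_mult_top)
next
  case False
  note [measurable] = couplingsD(4,5)[OF \<zeta>]
  have int: "integrable \<zeta> (\<lambda>p. \<bar>fst p - snd p\<bar>)"
    using False by (intro integrableI_bounded) (auto simp: top.not_eq_extremum)
  have LB_nonempty: "LB \<noteq> {}"
    by (auto simp: LB_def intro!: exI[of _ "\<lambda>_. 0"])
  have "LB_dist (psi k P) (psi k Q) \<le> 2 * sqrt (real k) * (\<integral>p. \<bar>fst p - snd p\<bar> \<partial>\<zeta>)"
    unfolding LB_dist_def
    by (rule cSUP_least[OF LB_nonempty]) (rule LB_integral_psi_diff_le_coupling[OF P Q \<zeta> _ k int])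
  then show ?thesis
    by (simp add: nn_integral_eq_integral[OF int] ennreal_leI flip: ennreal_mult)
qed

theorem proposition3:
  fixes k :: nat and P Q :: "real measure"
  assumes "k \<ge> 1"
    and "P \<in> class_M \<union> class_D"
    and "Q \<in> class_M \<union> class_D"
  shows "ennreal (LB_dist (psi k P) (psi k Q)) \<le> 2 * ennreal (sqrt (real k)) * wasserstein P Q"
proof -
  have P: "borel_prob P" and Q: "borel_prob Q"
    using assms(2,3) by (auto simp: class_M_def class_D_def)
  have "ennreal (LB_dist (psi k P) (psi k Q)) \<le> ennreal (2 * sqrt (real k)) * wasserstein P Q"
    unfolding wasserstein_def using assms(1)
    by (intro ennreal_le_mult_INF LB_dist_psi_le_coupling[OF P Q]) auto
  then show ?thesis
    by (simp add: ennreal_mult)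
qed

end
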